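(* Any profinite minimal action $\Gamma\curvearrowright X$ of a countable group on a zero-dimensional compact metric space $X$ has comparison.
   Context: An action $\Gamma\curvearrowright X$ on a zero-dimensional compact metric space is profinite if the orbits of the induced action of $\Gamma$ on the set $\mathrm{Clo}(X)$ of clopen subsets of $X$ are all finite; it is minimal if every orbit in $X$ is dense. Let $\mathrm{Prob}_\Gamma(X)$ denote the set of $\Gamma$-invariant Borel probability measures on $X$. The action has comparison if for all nonempty clopen sets $A,B\subseteq X$ with $\mu(A)<\mu(B)$ for all $\mu\in\mathrm{Prob}_\Gamma(X)$, there exist a partition $A=\bigsqcup_{i=1}^n C_i$ into clopen sets and elements $\gamma_1,\dots,\gamma_n\in\Gamma$ such that the sets $\gamma_iC_i$ ($1\le i\le n$) are pairwise disjoint subsets of $B$. *)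

theory Defs
  imports "HOL-Probability.Probability"
begin

text \<open>A (left) action of a group \<open>'g\<close> (written additively via the class group_add,
  which is NOT assumed commutative) on a topological space \<open>'x\<close> by homeomorphisms.\<close>
definition group_action :: "('g::group_add \<Rightarrow> 'x::topological_space \<Rightarrow> 'x) \<Rightarrow> bool" where
  "group_action act \<longleftrightarrow>
     (\<forall>x. act 0 x = x) \<and>
     (\<forall>g h x. act (g + h) x = act g (act h x)) \<and>
     (\<forall>g. continuous_on UNIV (act g))"

definition clopen_set :: "'x::topological_space set \<Rightarrow> bool" where
  "clopen_set A \<longleftrightarrow> open A \<and> closed A"

definition zero_dimensional :: "'x::topological_space itself \<Rightarrow> bool" where
  "zero_dimensional _ \<longleftrightarrow>
     (\<forall>U::'x set. \<forall>x\<in>U. open U \<longrightarrow> (\<exists>C. clopen_set C \<and> x \<in> C \<and> C \<subseteq> U))"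

definition profinite_action :: "('g::group_add \<Rightarrow> 'x::topological_space \<Rightarrow> 'x) \<Rightarrow> bool" where
  "profinite_action act \<longleftrightarrow>
     (\<forall>A. clopen_set A \<longrightarrow> finite {act g ` A | g. True})"

definition minimal_action :: "('g::group_add \<Rightarrow> 'x::topological_space \<Rightarrow> 'x) \<Rightarrow> bool" where
  "minimal_action act \<longleftrightarrow> (\<forall>x. closure (range (\<lambda>g. act g x)) = UNIV)"

definition inv_prob_measures ::
  "('g::group_add \<Rightarrow> 'x::topological_space \<Rightarrow> 'x) \<Rightarrow> 'x measure set" where
  "inv_prob_measures act =
     {\<mu>. sets \<mu> = sets borel \<and> prob_space \<mu> \<and>
         (\<forall>g A. A \<in> sets borel \<longrightarrow> emeasure \<mu> (act g -` A) = emeasure \<mu> A)}"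

definition has_comparison :: "('g::group_add \<Rightarrow> 'x::topological_space \<Rightarrow> 'x) \<Rightarrow> bool" where
  "has_comparison act \<longleftrightarrow>
     (\<forall>A B. clopen_set A \<and> clopen_set B \<and> A \<noteq> {} \<and> B \<noteq> {} \<and>
        (\<forall>\<mu>\<in>inv_prob_measures act. measure \<mu> A < measure \<mu> B) \<longrightarrow>
        (\<exists>(n::nat) (C::nat \<Rightarrow> 'x set) (\<gamma>::nat \<Rightarrow> 'g).
            (\<forall>i<n. clopen_set (C i)) \<and>
            disjoint_family_on C {..<n} \<and>
            A = (\<Union>i<n. C i) \<and>
            disjoint_family_on (\<lambda>i. act (\<gamma> i) ` C i) {..<n} \<and>
            (\<forall>i<n. act (\<gamma> i) ` C i \<subseteq> B)))"

end

theory Submission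
  imports Defs
begin

(*
  Let A and B be clopen. Profiniteness makes the union S of the orbits of A and B in the set of
  clopen sets a finite invariant family. The atoms of S (the classes of points lying in the same
  members of S) form a finite clopen partition of X that the group permutes, transitively by
  minimality. Every invariant probability measure therefore gives all atoms the same mass, so if
  mu A < mu B for one such mu, then A is made of at most as many atoms as B, and moving the atoms of
  A one by one onto distinct atoms of B witnesses comparison.

  Invariant probability measures exist: the proportion of the translates of a clopen set that
  contain a fixed point is a finitely additive, invariant, normalised function on clopen sets,
  and compactness makes it extend to a Borel measure.
*)

context
  fixes act :: "'g::group_add \<Rightarrow> 'x::topological_space \<Rightarrow> 'x"
  assumes action: "group_action act"
begin

lemma act_zero [simp]: "act 0 x = x"
  using action by (simp add: group_action_def)

lemma act_add: "act (g + h) x = act g (act h x)"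
  using action by (simp add: group_action_def)

lemma continuous_on_act: "continuous_on UNIV (act g)"
  using action by (simp add: group_action_def)

lemma act_neg_act [simp]: "act (- g) (act g x) = x"
  by (simp flip: act_add)

lemma act_act_neg [simp]: "act g (act (- g) x) = x"
  by (simp flip: act_add)

lemma inj_act: "inj (act g)"
  by (metis act_neg_act injI)

lemma vimage_act: "act g -` A = act (- g) ` A"
  by (force simp: image_iff)

lemma image_act_image_act: "act g ` act h ` A = act (g + h) ` A"
  by (auto simp: act_add image_image)

lemma clopen_image_act: "clopen_set C \<Longrightarrow> clopen_set (act g ` C)"
  unfolding clopen_set_def vimage_act [of "- g", simplified, symmetric]
  using continuous_on_act by (auto intro: open_vimage closed_vimage)

end

section \<open>Orbit frequencies\<close>

lemma card_fibres_equivariant_eq: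
  fixes f :: "'g::group_add \<Rightarrow> 'a" and p :: "'a \<Rightarrow> 'b"
  assumes f_compat: "\<And>g h h'. f h = f h' \<Longrightarrow> f (g + h) = f (g + h')"
    and pf_compat: "\<And>g h h'. p (f h) = p (f h') \<Longrightarrow> p (f (g + h)) = p (f (g + h'))"
  shows "card {r \<in> range f. p r = p (f g)} = card {r \<in> range f. p r = p (f 0)}"
proof -
  define \<tau> where "\<tau> g r = f (g + inv f r)" for g r
  have \<tau>: "\<tau> g (f h) = f (g + h)" for g h
    unfolding \<tau>_def by (rule f_compat) (simp add: f_inv_into_f)
  have "bij_betw (\<tau> g) {r \<in> range f. p r = p (f 0)} {r \<in> range f. p r = p (f g)}"
  proof (rule bij_betw_byWitness [where f' = "\<tau> (- g)"])
    show "\<tau> g ` {r \<in> range f. p r = p (f 0)} \<subseteq> {r \<in> range f. p r = p (f g)}"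
      using pf_compat [of _ 0 g] by (auto simp: \<tau>)
    show "\<tau> (- g) ` {r \<in> range f. p r = p (f g)} \<subseteq> {r \<in> range f. p r = p (f 0)}"
      using pf_compat [of _ g "- g"] by (auto simp: \<tau>)
  qed (auto simp: \<tau> add.assoc [symmetric])
  then show ?thesis
    by (simp add: bij_betw_same_card)
qed

text \<open>The group acts transitively on \<open>range f\<close> and \<open>p\<close> is equivariant, so \<open>p\<close> maps the
  uniform distribution on \<open>range f\<close> to the uniform distribution on its image.\<close>
lemma card_ratio_equivariant_image:
  fixes f :: "'g::group_add \<Rightarrow> 'a" and p :: "'a \<Rightarrow> 'b"
  assumes f_compat: "\<And>g h h'. f h = f h' \<Longrightarrow> f (g + h) = f (g + h')"
    and pf_compat: "\<And>g h h'. p (f h) = p (f h') \<Longrightarrow> p (f (g + h)) = p (f (g + h'))"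
    and fin: "finite (range f)"
  shows "real (card {r \<in> range f. Q (p r)}) / card (range f)
       = real (card {s \<in> p ` range f. Q s}) / card (p ` range f)"
proof -
  define fibre where "fibre s = {r \<in> range f. p r = s}" for s
  define N where "N = card (fibre (p (f 0)))"
  have "card (fibre (p (f g))) = N" for g
    unfolding fibre_def N_def by (rule card_fibres_equivariant_eq [of f p, OF f_compat pf_compat])
  then have card_fibre: "card (fibre s) = N" if "s \<in> p ` range f" for s
    using that by blast
  have card_Union_fibres: "card {r \<in> range f. P (p r)} = card {s \<in> p ` range f. P s} * N" for P
  proof -
    have "{r \<in> range f. P (p r)} = (\<Union>s \<in> {s \<in> p ` range f. P s}. fibre s)"
      by (auto simp: fibre_def)
    also have "card \<dots> = (\<Sum>s \<in> {s \<in> p ` range f. P s}. card (fibre s))"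
      using fin by (intro card_UN_disjoint) (auto simp: fibre_def)
    also have "\<dots> = card {s \<in> p ` range f. P s} * N"
      by (simp add: card_fibre)
    finally show ?thesis .
  qed
  have "f 0 \<in> fibre (p (f 0))" "finite (fibre (p (f 0)))"
    using fin by (simp_all add: fibre_def)
  then have "real N \<noteq> 0"
    unfolding N_def by (metis card_0_eq empty_iff of_nat_eq_0_iff)
  moreover have "card (range f) = card (p ` range f) * N"
    using card_Union_fibres [of "\<lambda>_. True"] by simp
  ultimately show ?thesis
    by (simp only: card_Union_fibres of_nat_mult mult_divide_mult_cancel_right simp_thms)
qed

definition translates :: "('g \<Rightarrow> 'x \<Rightarrow> 'x) \<Rightarrow> 'x set \<Rightarrow> 'x set set" where
  "translates act C = range (\<lambda>g. act g ` C)"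

text \<open>For a profinite action this is the Haar measure, on the closure of the acting group, of the
  set of elements moving \<open>x\<close> into \<open>C\<close>; every choice of \<open>x\<close> yields an invariant measure.\<close>
definition orbit_frequency :: "('g \<Rightarrow> 'x \<Rightarrow> 'x) \<Rightarrow> 'x \<Rightarrow> 'x set \<Rightarrow> real" where
  "orbit_frequency act x C = card {D \<in> translates act C. x \<in> D} / card (translates act C)"

lemma finite_translates: "profinite_action act \<Longrightarrow> clopen_set C \<Longrightarrow> finite (translates act C)"
  by (simp add: profinite_action_def translates_def full_SetCompr_eq)

lemma orbit_frequency_empty [simp]: "orbit_frequency act x {} = 0"
  by (simp add: orbit_frequency_def translates_def)

lemma orbit_frequency_nonneg: "orbit_frequency act x C \<ge> 0"
  by (simp add: orbit_frequency_def)

context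
  fixes act :: "'g::group_add \<Rightarrow> 'x::topological_space \<Rightarrow> 'x"
  assumes action: "group_action act"
begin

lemma self_in_translates: "C \<in> translates act C"
proof -
  have "act 0 ` C = C"
    by (simp add: action)
  then show ?thesis
    unfolding translates_def by (metis rangeI)
qed

lemma clopen_translates:
  assumes "clopen_set C" and "D \<in> translates act C"
  shows "clopen_set D"
proof -
  obtain g where "D = act g ` C"
    using assms(2) by (auto simp: translates_def)
  then show ?thesis
    using clopen_image_act [OF action assms(1)] by simp
qed

lemma image_act_in_translates: "D \<in> translates act C \<Longrightarrow> act g ` D \<in> translates act C"
  by (auto simp: translates_def image_act_image_act [OF action])

lemma translates_image_act: "translates act (act g ` C) = translates act C"
proof -
  have "act h ` C \<in> range (\<lambda>k. act (k + g) ` C)" for h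
    by (rule image_eqI [where x = "h + - g"]) (simp_all add: add.assoc)
  then show ?thesis
    by (auto simp: translates_def image_act_image_act [OF action])
qed

lemma orbit_frequency_image_act: "orbit_frequency act x (act g ` C) = orbit_frequency act x C"
  by (simp add: orbit_frequency_def translates_image_act)

lemma orbit_frequency_UNIV: "orbit_frequency act x UNIV = 1"
proof -
  have "act g ` UNIV = UNIV" for g
    by (metis act_act_neg [OF action] surjI)
  then have "translates act UNIV = {UNIV}"
    by (simp add: translates_def)
  moreover have "{D \<in> {UNIV}. x \<in> D} = {UNIV}"
    by auto
  ultimately show ?thesis
    by (simp add: orbit_frequency_def translates_def)
qed

lemma orbit_frequency_eq_card_ratio:
  fixes F :: "'g \<Rightarrow> 'a"
  assumes F_compat: "\<And>g h h'. F h = F h' \<Longrightarrow> F (g + h) = F (g + h')"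
    and p_F: "\<And>g. p (F g) = act g ` C"
    and fin: "finite (range F)"
  shows "orbit_frequency act x C = real (card {r \<in> range F. x \<in> p r}) / card (range F)"
proof -
  have p_compat: "p (F (g + h)) = p (F (g + h'))" if "p (F h) = p (F h')" for g h h'
    using that by (simp only: p_F flip: image_act_image_act [OF action])
  have "p ` range F = translates act C"
    by (simp only: translates_def image_image p_F)
  moreover have "real (card {r \<in> range F. x \<in> p r}) / card (range F)
      = real (card {D \<in> p ` range F. x \<in> D}) / card (p ` range F)"
    by (rule card_ratio_equivariant_image [of F p, OF F_compat p_compat fin])
  ultimately show ?thesis
    by (simp only: orbit_frequency_def)
qed

lemma orbit_frequency_Un:
  assumes profinite: "profinite_action act" and "clopen_set C" "clopen_set D" "C \<inter> D = {}"
  shows "orbit_frequency act x (C \<union> D) = orbit_frequency act x C + orbit_frequency act x D"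
proof -
  define F where "F g = (act g ` C, act g ` D)" for g
  have F_compat: "F (g + h) = F (g + h')" if "F h = F h'" for g h h'
    using that by (simp add: F_def flip: image_act_image_act [OF action])
  have "range F \<subseteq> translates act C \<times> translates act D"
    by (auto simp: F_def translates_def)
  then have fin: "finite (range F)"
    using assms by (meson finite_SigmaI finite_subset finite_translates)
  have "fst (F g) \<inter> snd (F g) = {}" for g
    using \<open>C \<inter> D = {}\<close> by (simp add: F_def flip: image_Int [OF inj_act [OF action]])
  then have "{r \<in> range F. x \<in> fst r} \<inter> {r \<in> range F. x \<in> snd r} = {}"
    by blast
  moreover have "{r \<in> range F. x \<in> fst r \<union> snd r}
      = {r \<in> range F. x \<in> fst r} \<union> {r \<in> range F. x \<in> snd r}"
    by blast
  ultimately have card_Un: "card {r \<in> range F. x \<in> fst r \<union> snd r}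
      = card {r \<in> range F. x \<in> fst r} + card {r \<in> range F. x \<in> snd r}"
    using fin by (simp add: card_Un_disjoint)
  define ratio where "ratio P = real (card {r \<in> range F. P r}) / card (range F)" for P
  have "orbit_frequency act x C = ratio (\<lambda>r. x \<in> fst r)"
    unfolding ratio_def
    by (rule orbit_frequency_eq_card_ratio [where F = F, OF F_compat _ fin]) (simp_all add: F_def)
  moreover have "orbit_frequency act x D = ratio (\<lambda>r. x \<in> snd r)"
    unfolding ratio_def
    by (rule orbit_frequency_eq_card_ratio [where F = F, OF F_compat _ fin]) (simp_all add: F_def)
  moreover have "orbit_frequency act x (C \<union> D) = ratio (\<lambda>r. x \<in> fst r \<union> snd r)"
    unfolding ratio_def
    by (rule orbit_frequency_eq_card_ratio [where F = F, OF F_compat _ fin]) (simp_all add: F_def image_Un)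
  ultimately show ?thesis
    by (simp only: ratio_def card_Un of_nat_add add_divide_distrib)
qed

end

section \<open>An invariant Borel probability measure\<close>

lemma algebra_clopen: "algebra UNIV {C :: 'x::topological_space set. clopen_set C}"
  unfolding algebra_iff_Un clopen_set_def
  by (auto simp: Compl_eq_Diff_UNIV [symmetric] open_Un closed_Un open_Compl closed_Compl)

lemma decseq_closed_Inter_empty:
  fixes A :: "nat \<Rightarrow> 'x::topological_space set"
  assumes "compact (UNIV :: 'x set)" and "\<And>i. closed (A i)" and "decseq A"
    and "(\<Inter>i. A i) = {}"
  shows "\<exists>n. A n = {}"
proof (rule ccontr)
  assume nonempty: "\<nexists>n. A n = {}"
  have "UNIV \<inter> (\<Inter>i. A i) \<noteq> {}"
  proof (rule compact_imp_fip_image [OF assms(1,2)])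
    fix I :: "nat set"
    assume "finite I"
    then have "A (Max I) \<subseteq> A i" if "i \<in> I" for i
      using \<open>decseq A\<close> Max_ge [OF \<open>finite I\<close> that] by (simp add: decseq_def)
    then show "UNIV \<inter> (\<Inter>i\<in>I. A i) \<noteq> {}"
      using nonempty by (cases "I = {}") blast+
  qed
  then show False
    using assms(4) by simp
qed

text \<open>Countable additivity on clopen sets is automatic: by compactness, a decreasing
  sequence of clopen sets with empty intersection is eventually empty.\<close>
lemma clopen_premeasure_extends:
  fixes f :: "'x::topological_space set \<Rightarrow> ennreal"
  assumes compact: "compact (UNIV :: 'x set)"
    and "positive {C. clopen_set C} f" and "additive {C. clopen_set C} f"
    and finite: "\<And>C. clopen_set C \<Longrightarrow> f C \<noteq> \<infinity>"
  shows "\<exists>M. sets M = sigma_sets UNIV {C. clopen_set C} \<and> (\<forall>C. clopen_set C \<longrightarrow> emeasure M C = f C)"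
proof -
  interpret algebra UNIV "{C :: 'x set. clopen_set C}"
    by (rule algebra_clopen)
  have "(\<lambda>i. f (A i)) \<longlonglongrightarrow> 0"
    if A: "range A \<subseteq> {C. clopen_set C}" "decseq A" "(\<Inter>i. A i) = {}" for A
  proof -
    obtain n where "A n = {}"
      using decseq_closed_Inter_empty [OF compact _ A(2,3)] A(1)
      by (auto simp: clopen_set_def)
    then have "\<forall>m\<ge>n. f (A m) = 0"
      using \<open>decseq A\<close> \<open>positive _ f\<close> by (metis decseqD subset_empty positive_def)
    then have "eventually (\<lambda>m. f (A m) = 0) sequentially"
      by (auto simp: eventually_sequentially)
    then show ?thesis
      by (rule tendsto_eventually)
  qed
  then obtain \<mu> where \<mu>: "\<forall>C \<in> {C. clopen_set C}. \<mu> C = f C"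
    and measure_space: "measure_space UNIV (sigma_sets UNIV {C. clopen_set C}) \<mu>"
    using caratheodory_empty_continuous assms(2,3) finite by blast
  define M where "M = measure_of UNIV (sigma_sets UNIV {C. clopen_set C}) \<mu>"
  have "sets M = sigma_sets UNIV {C. clopen_set C}"
    by (simp add: M_def sigma_sets_sigma_sets_eq)
  moreover have "emeasure M C = f C" if "clopen_set C" for C
    using measure_space \<mu> that unfolding M_def measure_space_def
    by (subst emeasure_measure_of_sigma) auto
  ultimately show ?thesis
    by blast
qed

lemma clopen_between_compact_open:
  assumes "zero_dimensional TYPE('x::topological_space)"
    and "compact K" and "open S" and "K \<subseteq> S"
  shows "\<exists>U :: 'x set. clopen_set U \<and> K \<subseteq> U \<and> U \<subseteq> S"
proof -
  have "K \<subseteq> \<Union>{C. clopen_set C \<and> C \<subseteq> S}"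
    using assms(1,3,4) unfolding zero_dimensional_def by blast
  then obtain \<F> where \<F>: "\<F> \<subseteq> {C. clopen_set C \<and> C \<subseteq> S}" "finite \<F>" "K \<subseteq> \<Union>\<F>"
    by (rule compactE [OF \<open>compact K\<close>]) (simp add: clopen_set_def)
  then have "clopen_set (\<Union>\<F>)"
    unfolding clopen_set_def by (intro conjI open_Union closed_Union) auto
  with \<F> show ?thesis
    by blast
qed

lemma sigma_sets_clopen_eq_borel:
  assumes compact: "compact (UNIV :: 'x::metric_space set)"
    and zd: "zero_dimensional TYPE('x)"
  shows "sigma_sets UNIV {C :: 'x set. clopen_set C} = sets borel"
proof
  show "sigma_sets UNIV {C :: 'x set. clopen_set C} \<subseteq> sets borel"
    unfolding sets_borel by (rule sigma_sets_mono') (auto simp: clopen_set_def)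
  have "S \<in> sigma_sets UNIV {C. clopen_set C}" if "open S" for S :: "'x set"
  proof -
    obtain K :: "nat \<Rightarrow> 'x set" where K: "\<And>n. closed (K n)" "(\<Union>n. K n) = S"
      using open_imp_fsigma_in [OF metrizable_space_euclidean, of S] \<open>open S\<close>
      by (auto simp: fsigma_in_ascending)
    have "\<exists>U. clopen_set U \<and> K n \<subseteq> U \<and> U \<subseteq> S" for n
      using K \<open>open S\<close> by (intro clopen_between_compact_open [OF zd])
        (auto intro: compact_Int_closed [OF compact, of "K n", simplified])
    then obtain U where U: "\<And>n. clopen_set (U n)" "\<And>n. K n \<subseteq> U n" "\<And>n. U n \<subseteq> S"
      by metis
    have "S = (\<Union>n. U n)"
      using U(2,3) K(2) by blast
    moreover have "U n \<in> sigma_sets UNIV {C. clopen_set C}" for n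
      using U(1) by blast
    ultimately show ?thesis
      by (metis sigma_sets.Union)
  qed
  then show "sets borel \<subseteq> sigma_sets UNIV {C :: 'x set. clopen_set C}"
    unfolding sets_borel by (intro sigma_sets_mono) auto
qed

lemma emeasure_vimage_eq_if_clopen:
  fixes f :: "'x::topological_space \<Rightarrow> 'x"
  assumes generated: "sigma_sets UNIV {C :: 'x set. clopen_set C} = sets borel"
    and sets_M: "sets M = sets borel" and "finite_measure M" and "continuous_on UNIV f"
    and clopen_eq: "\<And>C. clopen_set C \<Longrightarrow> emeasure M (f -` C) = emeasure M C"
    and "A \<in> sets borel"
  shows "emeasure M (f -` A) = emeasure M A"
proof -
  have space_M: "space M = UNIV"
    using sets_eq_imp_space_eq [OF sets_M] by simp
  have f_meas: "f \<in> measurable M M"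
    unfolding measurable_cong_sets [OF sets_M sets_M]
    by (rule borel_measurable_continuous_onI) fact
  have "distr M M f = M"
  proof (rule measure_eqI_generator_eq [where E = "{C. clopen_set C}" and \<Omega> = UNIV and A = "\<lambda>_. UNIV"])
    show "Int_stable {C :: 'x set. clopen_set C}"
      using algebra.Int_stable [OF algebra_clopen] .
    show "emeasure (distr M M f) C = emeasure M C" if "C \<in> {C. clopen_set C}" for C
      using that clopen_eq sets_M by (subst emeasure_distr [OF f_meas]) (auto simp: space_M clopen_set_def)
    show "emeasure (distr M M f) UNIV \<noteq> \<infinity>"
      using emeasure_distr [OF f_meas, of UNIV] sets.top [of M] \<open>finite_measure M\<close>
      by (simp add: space_M finite_measure.emeasure_finite)
  qed (use generated sets_M in \<open>auto simp: clopen_set_def\<close>)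
  then show ?thesis
    using emeasure_distr [OF f_meas, of A] \<open>A \<in> sets borel\<close> by (simp add: sets_M space_M)
qed

lemma exists_invariant_prob_measure:
  fixes act :: "'g::group_add \<Rightarrow> 'x::metric_space \<Rightarrow> 'x"
  assumes compact: "compact (UNIV :: 'x set)" and zd: "zero_dimensional TYPE('x)"
    and action: "group_action act" and profinite: "profinite_action act"
  shows "\<exists>\<mu>. \<mu> \<in> inv_prob_measures act"
proof -
  fix x :: 'x
  define f where "f C = ennreal (orbit_frequency act x C)" for C
  have "positive {C. clopen_set C} f"
    by (simp add: positive_def f_def)
  moreover have "additive {C. clopen_set C} f"
    unfolding additive_def f_def
    by (simp add: orbit_frequency_Un [OF action profinite] orbit_frequency_nonneg ennreal_plus)
  moreover have "f C \<noteq> \<infinity>" for C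
    by (simp add: f_def)
  ultimately obtain M where sets_M: "sets M = sigma_sets UNIV {C. clopen_set C}"
    and M_clopen: "\<And>C. clopen_set C \<Longrightarrow> emeasure M C = f C"
    using clopen_premeasure_extends [OF compact] by blast
  have generated: "sigma_sets UNIV {C :: 'x set. clopen_set C} = sets borel"
    by (rule sigma_sets_clopen_eq_borel [OF compact zd])
  then have sets_borel: "sets M = sets borel"
    using sets_M by simp
  have "prob_space M"
  proof (rule prob_spaceI)
    have "clopen_set (UNIV :: 'x set)"
      by (simp add: clopen_set_def)
    then show "emeasure M (space M) = 1"
      using sets_eq_imp_space_eq [OF sets_borel] M_clopen [of UNIV]
      by (simp add: f_def orbit_frequency_UNIV [OF action])
  qed
  moreover have "emeasure M (act g -` A) = emeasure M A" if "A \<in> sets borel" for g A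
  proof (rule emeasure_vimage_eq_if_clopen [OF generated sets_borel _ continuous_on_act [OF action] _ that])
    show "finite_measure M"
      using \<open>prob_space M\<close> by (simp add: prob_space_def)
    fix C :: "'x set"
    assume "clopen_set C"
    then have "emeasure M (act g -` C) = f (act (- g) ` C)"
      by (simp add: vimage_act [OF action] M_clopen clopen_image_act [OF action])
    also have "\<dots> = emeasure M C"
      using \<open>clopen_set C\<close> by (simp add: f_def orbit_frequency_image_act [OF action] M_clopen)
    finally show "emeasure M (act g -` C) = emeasure M C" .
  qed
  ultimately show ?thesis
    unfolding inv_prob_measures_def using sets_borel by blast
qed

section \<open>Atoms of a finite invariant family of clopen sets\<close>

definition atom_of :: "'x set set \<Rightarrow> 'x \<Rightarrow> 'x set" where
  "atom_of S x = {y. \<forall>D\<in>S. y \<in> D \<longleftrightarrow> x \<in> D}"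

lemma atom_of_self: "x \<in> atom_of S x"
  by (simp add: atom_of_def)

lemma atom_of_eq: "y \<in> atom_of S x \<Longrightarrow> atom_of S y = atom_of S x"
  by (auto simp: atom_of_def)

lemma atom_of_disjoint: "atom_of S x \<noteq> atom_of S y \<Longrightarrow> atom_of S x \<inter> atom_of S y = {}"
  by (metis atom_of_eq disjoint_iff)

lemma disjoint_atoms: "disjoint (range (atom_of S))"
proof (rule disjointI)
  fix a b
  assume "a \<in> range (atom_of S)" "b \<in> range (atom_of S)" "a \<noteq> b"
  then obtain x y where "a = atom_of S x" "b = atom_of S y"
    by blast
  with \<open>a \<noteq> b\<close> show "a \<inter> b = {}"
    by (simp add: atom_of_disjoint)
qed

lemma atom_of_subset: "D \<in> S \<Longrightarrow> x \<in> D \<Longrightarrow> atom_of S x \<subseteq> D"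
  by (auto simp: atom_of_def)

lemma Union_atoms_subset:
  assumes "D \<in> S"
  shows "\<Union>{a \<in> range (atom_of S). a \<subseteq> D} = D"
proof
  show "D \<subseteq> \<Union>{a \<in> range (atom_of S). a \<subseteq> D}"
  proof
    fix x
    assume "x \<in> D"
    then have "atom_of S x \<in> {a \<in> range (atom_of S). a \<subseteq> D}"
      using atom_of_subset [OF \<open>D \<in> S\<close>] by blast
    then show "x \<in> \<Union>{a \<in> range (atom_of S). a \<subseteq> D}"
      by (rule UnionI) (rule atom_of_self)
  qed
qed auto

lemma finite_atoms: "finite S \<Longrightarrow> finite (range (atom_of S))"
proof -
  assume "finite S"
  have "atom_of S x = (\<lambda>T. {y. {D \<in> S. y \<in> D} = T}) {D \<in> S. x \<in> D}" for x
    by (auto simp: atom_of_def)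
  then have "range (atom_of S) \<subseteq> (\<lambda>T. {y. {D \<in> S. y \<in> D} = T}) ` Pow S"
    by blast
  then show ?thesis
    using \<open>finite S\<close> finite_subset by blast
qed

lemma clopen_atom_of:
  assumes "finite S" and "\<And>D. D \<in> S \<Longrightarrow> clopen_set D"
  shows "clopen_set (atom_of S x)"
proof -
  have atom: "atom_of S x = (\<Inter>D\<in>S. if x \<in> D then D else - D)"
    by (auto simp: atom_of_def)
  have "open (if x \<in> D then D else - D) \<and> closed (if x \<in> D then D else - D)"
    if "D \<in> S" for D
    using assms(2) [OF that] by (simp add: clopen_set_def open_Compl closed_Compl)
  then show ?thesis
    unfolding atom clopen_set_def using \<open>finite S\<close> by (intro conjI open_INT closed_INT) blast+
qed

lemma atom_of_image:
  assumes "bij f"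
  shows "atom_of ((`) f ` S) (f x) = f ` atom_of S x"
proof -
  have "f z \<in> atom_of ((`) f ` S) (f x) \<longleftrightarrow> f z \<in> f ` atom_of S x" for z
    using bij_is_inj [OF assms] by (simp add: atom_of_def inj_image_mem_iff)
  then show ?thesis
    by (metis assms bij_is_surj set_eqI surjD)
qed

context
  fixes act :: "'g::group_add \<Rightarrow> 'x::topological_space \<Rightarrow> 'x"
  assumes action: "group_action act"
begin

lemma bij_act: "bij (act g)"
  by (rule bijI [OF inj_act [OF action]]) (rule surjI [of _ "act (- g)"], simp add: action)

lemma atom_of_act:
  assumes invariant: "\<And>D g. D \<in> S \<Longrightarrow> act g ` D \<in> S"
  shows "atom_of S (act g x) = act g ` atom_of S x"
proof -
  have "D = act g ` act (- g) ` D" for D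
    by (simp add: image_act_image_act [OF action] action)
  then have "(`) (act g) ` S = S"
    using invariant by blast
  then show ?thesis
    using atom_of_image [OF bij_act, of g S x] by simp
qed

lemma atom_of_transitive:
  assumes invariant: "\<And>D g. D \<in> S \<Longrightarrow> act g ` D \<in> S"
    and "minimal_action act" and "finite S" and "\<And>D. D \<in> S \<Longrightarrow> clopen_set D"
  shows "\<exists>g. atom_of S y = act g ` atom_of S x"
proof -
  have "open (atom_of S y)"
    using clopen_atom_of [OF assms(3,4)] by (simp add: clopen_set_def)
  have "atom_of S y \<inter> closure (range (\<lambda>g. act g x)) \<noteq> {}"
    using \<open>minimal_action act\<close> atom_of_self [of y S] by (auto simp: minimal_action_def)
  then have "atom_of S y \<inter> range (\<lambda>g. act g x) \<noteq> {}"
    using open_Int_closure_eq_empty [OF \<open>open (atom_of S y)\<close>] by blast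
  then obtain g where "act g x \<in> atom_of S y"
    by blast
  then show ?thesis
    using atom_of_eq atom_of_act [OF invariant] by metis
qed

lemma measure_image_act:
  assumes "\<mu> \<in> inv_prob_measures act" and "A \<in> sets borel"
  shows "measure \<mu> (act g ` A) = measure \<mu> A"
proof -
  have "act g ` A = act (- g) -` A"
    by (simp add: vimage_act [OF action])
  then show ?thesis
    using assms by (simp add: inv_prob_measures_def measure_def)
qed

lemma measure_Union_atoms:
  assumes \<mu>: "\<mu> \<in> inv_prob_measures act" and "minimal_action act"
    and "finite S" and clopen: "\<And>D. D \<in> S \<Longrightarrow> clopen_set D"
    and invariant: "\<And>D g. D \<in> S \<Longrightarrow> act g ` D \<in> S"
    and \<A>: "\<A> \<subseteq> range (atom_of S)"
  shows "measure \<mu> (\<Union>\<A>) = card \<A> * measure \<mu> (atom_of S x)"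
proof -
  have atom_borel: "atom_of S y \<in> sets borel" for y
    using clopen_atom_of [OF \<open>finite S\<close> clopen] by (simp add: clopen_set_def)
  have sets_\<mu>: "sets \<mu> = sets borel" and "finite_measure \<mu>"
    using \<mu> by (auto simp: inv_prob_measures_def prob_space_def)
  have "measure \<mu> a = measure \<mu> (atom_of S x)" if a: "a \<in> \<A>" for a
  proof -
    obtain y where "a = atom_of S y"
      using a \<A> by blast
    moreover obtain g where "atom_of S y = act g ` atom_of S x"
      using atom_of_transitive [OF invariant \<open>minimal_action act\<close> \<open>finite S\<close> clopen] by blast
    ultimately show ?thesis
      using measure_image_act [OF \<mu> atom_borel] by simp
  qed
  moreover have "disjoint_family_on (\<lambda>a. a) \<A>"
    using pairwise_subset [OF disjoint_atoms \<A>] by (intro disjoint_image_disjoint_family_on) simp_all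
  then have "measure \<mu> (\<Union>a\<in>\<A>. a) = (\<Sum>a\<in>\<A>. measure \<mu> a)"
    using \<A> finite_atoms [OF \<open>finite S\<close>] atom_borel sets_\<mu>
      finite_measure.emeasure_finite [OF \<open>finite_measure \<mu>\<close>]
    by (intro measure_finite_Union) (auto intro: finite_subset)
  ultimately show ?thesis
    by simp
qed

end

definition clopen_subequivalent :: "('g \<Rightarrow> 'x::topological_space \<Rightarrow> 'x) \<Rightarrow> 'x set \<Rightarrow> 'x set \<Rightarrow> bool" where
  "clopen_subequivalent act A B \<longleftrightarrow>
     (\<exists>(n::nat) (C::nat \<Rightarrow> 'x set) \<gamma>.
        (\<forall>i<n. clopen_set (C i)) \<and>
        disjoint_family_on C {..<n} \<and>
        A = (\<Union>i<n. C i) \<and>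
        disjoint_family_on (\<lambda>i. act (\<gamma> i) ` C i) {..<n} \<and>
        (\<forall>i<n. act (\<gamma> i) ` C i \<subseteq> B))"

lemma clopen_subequivalentI:
  fixes act :: "'g \<Rightarrow> 'x::topological_space \<Rightarrow> 'x"
  assumes "finite \<A>" "finite \<B>" "card \<A> \<le> card \<B>"
    and "disjoint \<A>" "disjoint \<B>" "\<And>a. a \<in> \<A> \<Longrightarrow> clopen_set a"
    and "\<Union>\<A> = A" "\<Union>\<B> \<subseteq> B"
    and moves: "\<And>a b. a \<in> \<A> \<Longrightarrow> b \<in> \<B> \<Longrightarrow> \<exists>g. b = act g ` a"
  shows "clopen_subequivalent act A B"
proof -
  obtain a where a: "bij_betw a {..<card \<A>} \<A>"
    using ex_bij_betw_nat_finite [OF \<open>finite \<A>\<close>] by (auto simp: atLeast0LessThan)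
  obtain b where b: "bij_betw b {..<card \<B>} \<B>"
    using ex_bij_betw_nat_finite [OF \<open>finite \<B>\<close>] by (auto simp: atLeast0LessThan)
  have b_inj: "inj_on b {..<card \<A>}"
    using b \<open>card \<A> \<le> card \<B>\<close> by (auto simp: bij_betw_def elim: inj_on_subset)
  have a_in: "a i \<in> \<A>" and b_in: "b i \<in> \<B>" if "i < card \<A>" for i
    using a b that \<open>card \<A> \<le> card \<B>\<close> by (auto simp: bij_betw_def)
  define \<gamma> where "\<gamma> i = (SOME g. b i = act g ` a i)" for i
  have \<gamma>: "act (\<gamma> i) ` a i = b i" if "i < card \<A>" for i
    using someI_ex [OF moves [OF a_in b_in, OF that that]] by (simp add: \<gamma>_def)
  have "\<forall>i<card \<A>. clopen_set (a i)" and "A = (\<Union>i<card \<A>. a i)"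
    using a a_in assms(6,7) by (auto simp: bij_betw_def)
  moreover have "disjoint_family_on a {..<card \<A>}"
    using a \<open>disjoint \<A>\<close> by (auto simp: bij_betw_def intro: disjoint_image_disjoint_family_on)
  moreover have "disjoint_family_on b {..<card \<A>}"
    using b_in b_inj \<open>disjoint \<B>\<close> by (intro disjoint_image_disjoint_family_on) (auto intro: pairwise_subset)
  then have "disjoint_family_on (\<lambda>i. act (\<gamma> i) ` a i) {..<card \<A>}"
    using \<gamma> by (simp add: disjoint_family_on_def)
  moreover have "\<forall>i<card \<A>. act (\<gamma> i) ` a i \<subseteq> B"
    using b_in \<gamma> \<open>\<Union>\<B> \<subseteq> B\<close> by (metis Sup_le_iff)
  ultimately show ?thesis
    unfolding clopen_subequivalent_def by blast
qed

lemma clopen_subequivalent_if_measure_less: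
  fixes act :: "'g::group_add \<Rightarrow> 'x::topological_space \<Rightarrow> 'x"
  assumes action: "group_action act" and minimal: "minimal_action act"
    and S: "finite S" "\<And>D. D \<in> S \<Longrightarrow> clopen_set D" "\<And>D g. D \<in> S \<Longrightarrow> act g ` D \<in> S"
    and "A \<in> S" "B \<in> S"
    and \<mu>: "\<mu> \<in> inv_prob_measures act" and smaller: "measure \<mu> A < measure \<mu> B"
  shows "clopen_subequivalent act A B"
proof -
  define \<A> where "\<A> = {a \<in> range (atom_of S). a \<subseteq> A}"
  define \<B> where "\<B> = {b \<in> range (atom_of S). b \<subseteq> B}"
  have atoms: "\<A> \<subseteq> range (atom_of S)" "\<B> \<subseteq> range (atom_of S)"
    by (simp_all add: \<A>_def \<B>_def)
  have "\<Union>\<A> = A" "\<Union>\<B> = B"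
    unfolding \<A>_def \<B>_def by (intro Union_atoms_subset \<open>A \<in> S\<close> \<open>B \<in> S\<close>)+
  fix x
  have "card \<A> * measure \<mu> (atom_of S x) < card \<B> * measure \<mu> (atom_of S x)"
    using smaller measure_Union_atoms [OF action \<mu> minimal S atoms(1)]
      measure_Union_atoms [OF action \<mu> minimal S atoms(2)] \<open>\<Union>\<A> = A\<close> \<open>\<Union>\<B> = B\<close>
    by simp
  then have card: "card \<A> \<le> card \<B>"
    by (simp add: mult_less_cancel_right)
  have finite: "finite \<A>" "finite \<B>"
    using finite_subset [OF atoms(1)] finite_subset [OF atoms(2)] finite_atoms [OF \<open>finite S\<close>]
    by simp_all
  have disjoint: "disjoint \<A>" "disjoint \<B>"
    using pairwise_subset [OF disjoint_atoms atoms(1)] pairwise_subset [OF disjoint_atoms atoms(2)]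
    by simp_all
  have clopen: "clopen_set a" if "a \<in> \<A>" for a
    using subsetD [OF atoms(1) that] clopen_atom_of [OF S(1,2)] by (metis rangeE)
  have moves: "\<exists>g. b = act g ` a" if "a \<in> \<A>" "b \<in> \<B>" for a b
    using subsetD [OF atoms(1) that(1)] subsetD [OF atoms(2) that(2)]
      atom_of_transitive [OF action S(3) minimal S(1,2)] by (metis rangeE)
  show ?thesis
    using \<open>\<Union>\<B> = B\<close>
    by (intro clopen_subequivalentI [OF finite card disjoint _ \<open>\<Union>\<A> = A\<close>] clopen moves) simp_all
qed

theorem lemma2p4:
  fixes act :: "'g::group_add \<Rightarrow> 'x::metric_space \<Rightarrow> 'x"
  assumes "countable (UNIV :: 'g set)"
    and "compact (UNIV :: 'x set)"
    and "zero_dimensional TYPE('x)"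
    and "group_action act"
    and "profinite_action act"
    and "minimal_action act"
  shows "has_comparison act"
  unfolding has_comparison_def clopen_subequivalent_def [symmetric]
proof (intro allI impI, elim conjE)
  note action = assms(4)
  fix A B :: "'x set"
  assume "clopen_set A" "clopen_set B"
    and smaller: "\<forall>\<mu>\<in>inv_prob_measures act. measure \<mu> A < measure \<mu> B"
  define S where "S = translates act A \<union> translates act B"
  have S: "finite S" "\<And>D. D \<in> S \<Longrightarrow> clopen_set D" "\<And>D g. D \<in> S \<Longrightarrow> act g ` D \<in> S"
    using \<open>clopen_set A\<close> \<open>clopen_set B\<close>
    by (auto simp: S_def finite_translates [OF assms(5)] clopen_translates [OF action]
        image_act_in_translates [OF action])
  have "A \<in> S" "B \<in> S"
    using self_in_translates [OF action] by (simp_all add: S_def)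
  obtain \<mu> where "\<mu> \<in> inv_prob_measures act"
    using exists_invariant_prob_measure [OF assms(2-5)] by blast
  with smaller show "clopen_subequivalent act A B"
    by (intro clopen_subequivalent_if_measure_less [OF action assms(6) S \<open>A \<in> S\<close> \<open>B \<in> S\<close>]) auto
qed

end
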